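(* Let $n$ be odd, let $k$ be a positive integer with $\gcd(k,n)=1$, let $L=GF(2^n)$, and let $t\in\{2,3\}$. For all $a\in L$ and $b,c\in L^*$, $$F^w(a,b,c)=\sum_{x\in L}(-1)^{\mathrm{Tr}\left(ax+bx^{2^k+1}+cx^{2^{tk}+1}\right)}\in\left\{0,\ \pm2^{\frac{n+1}{2}},\ \pm 2^{\frac{n+3}{2}}\right\}.$$
   Context: $\mathrm{Tr}$ denotes the absolute trace from $GF(2^n)$ to $GF(2)$, $\mathrm{Tr}(x)=\sum_{i=0}^{n-1}x^{2^i}$; $L^*=L\setminus\{0\}$. *)

theory Defs
  imports Main
begin

text \<open>Absolute trace from a field of order 2^n to its prime field GF(2),
  Tr(x) = sum over i < n of x^(2^i).  Its values are 0 or 1 in the field.\<close>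
definition abs_trace :: "nat \<Rightarrow> 'a::field \<Rightarrow> 'a" where
  "abs_trace n x = (\<Sum>i<n. x ^ (2 ^ i))"

definition chi :: "nat \<Rightarrow> 'a::field \<Rightarrow> int" where
  "chi n y = (if abs_trace n y = 0 then 1 else -1)"

definition Fw :: "nat \<Rightarrow> nat \<Rightarrow> nat \<Rightarrow> 'a::{field,finite} \<Rightarrow> 'a \<Rightarrow> 'a \<Rightarrow> int" where
  "Fw n k t a b c = (\<Sum>x\<in>(UNIV::'a set).
      chi n (a * x + b * x ^ (2 ^ k + 1) + c * x ^ (2 ^ (t * k) + 1)))"

end

theory Submission
  imports Defs "HOL-Number_Theory.Residues"
begin

(* Squaring and substituting y = x + z gives the classical identity
     F^2 = 2^n * sum_{z in R} (-1)^Tr(f(z)),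
   where R is the radical of the polar form B(x,z) = f(x+z) + f(x) + f(z), i.e. the set
   of z with Tr(B(x,z)) = 0 for all x.  R is an additive subgroup on which
   (-1)^Tr(f) is a character, so the inner sum is 0 or |R|.  Moving all Frobenius powers
   onto z with the invariance Tr(u^2) = Tr(u) shows that R consists of roots of a
   linearized polynomial sum_{i<=d} a_i z^(2^(m i)) with gcd(m,n) = 1 and a_d <> 0
   (d = 4, m = k for t = 2; d = 3, m = 2k for t = 3); dividing by v z^(2^m) + v^(2^m) z
   for a root v shows such a polynomial has at most 2^d roots.  Hence F = 0 or
   F^2 = 2^n r with 1 <= r <= 16, and for odd n an integer square of this shape is 2^(n+1) or 2^(n+3). *)

section \<open>Fields with \<open>2^n\<close> elements\<close>

locale binary_field =
  fixes n :: nat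
  assumes card_UNIV: "card (UNIV :: 'a::{field,finite} set) = 2 ^ n"
begin

lemma CHAR_eq_2: "CHAR('a) = 2"
proof -
  have "prime CHAR('a)"
    by (rule prime_CHAR_semidom) (simp add: finite_imp_CHAR_pos)
  moreover have "CHAR('a) dvd 2 ^ n"
    using CHAR_dvd_CARD[where 'a='a] card_UNIV by simp
  ultimately show ?thesis
    by (metis prime_dvd_power primes_dvd_imp_eq two_is_prime_nat)
qed

lemma two_eq_zero: "(2::'a) = 0"
  using of_nat_CHAR[where 'a='a] CHAR_eq_2 by simp

lemma add_self [simp]: "(x::'a) + x = 0"
  by (metis mult_2 two_eq_zero mult_zero_left)

lemma uminus_self [simp]: "- (x::'a) = x"
  by (metis add_self add.inverse_unique)

lemma add_eq_0_iff: "(x::'a) + y = 0 \<longleftrightarrow> x = y"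
  by (metis add_self add_right_cancel)

lemma frobenius_add: "((x::'a) + y) ^ (2 ^ j) = x ^ (2 ^ j) + y ^ (2 ^ j)"
  using freshmans_dream'[where 'a='a and m="2^j" and n=j] CHAR_eq_2 by simp

lemma frobenius_sum: "(sum (f::'b \<Rightarrow> 'a) A) ^ (2 ^ j) = (\<Sum>i\<in>A. f i ^ (2 ^ j))"
  using freshmans_dream_sum'[where 'a='a and m="2^j" and n=j] CHAR_eq_2 by simp

lemma frobenius_comp: "((x::'a) ^ (2 ^ p)) ^ (2 ^ q) = x ^ (2 ^ (p + q))"
  by (simp add: power_mult[symmetric] power_add)

lemma frobenius_iterate:
  assumes "(x::'a) ^ (2 ^ m) = x"
  shows "x ^ (2 ^ (m * j)) = x"
proof (induction j)
  case (Suc j)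
  have "x ^ (2 ^ (m * Suc j)) = (x ^ (2 ^ (m * j))) ^ (2 ^ m)"
    by (simp add: frobenius_comp add.commute)
  then show ?case using Suc assms by simp
qed simp

text \<open>Fermat's little theorem for \<open>L\<close>: multiplication by a unit \<open>x\<close> permutes \<open>L\<^sup>*\<close>,
  so comparing the products over \<open>L\<^sup>*\<close> gives \<open>x^(|L|-1) = 1\<close>.\<close>

lemma power_card: "(x::'a) ^ (2 ^ n) = x"
proof (cases "x = 0")
  case False
  let ?U = "UNIV - {0::'a}"
  have "(\<Prod>y\<in>?U. x * y) = (\<Prod>y\<in>?U. y)"
    by (rule prod.reindex_bij_witness[of _ "\<lambda>y. y / x" "\<lambda>y. x * y"]) (use False in auto)
  hence "x ^ card ?U * (\<Prod>y\<in>?U. y) = (\<Prod>y\<in>?U. y)"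
    by (simp add: prod.distrib)
  moreover have "(\<Prod>y\<in>?U. y) \<noteq> 0" by simp
  ultimately have "x ^ card ?U = 1" by simp
  moreover have "Suc (card ?U) = 2 ^ n"
    using card_UNIV card_Diff_singleton[of 0 "UNIV :: 'a set"] finite_UNIV_card_ge_0[where 'a='a]
    by simp
  ultimately show ?thesis by (metis power_Suc2 mult_1)
qed simp

lemma frobenius_fixed_points:
  assumes "m > 0" "gcd m n = 1" "(x::'a) ^ (2 ^ m) = x"
  shows "x = 0 \<or> x = 1"
proof -
  obtain u v where uv: "m * u = n * v + 1"
    using bezout_nat[of m n] assms by auto
  have "x = x ^ (2 ^ (m * u))" using frobenius_iterate[OF assms(3)] by simp
  also have "\<dots> = (x ^ (2 ^ (n * v))) ^ 2"
    by (simp add: uv frobenius_comp[of x "n*v" 1, simplified])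
  also have "\<dots> = x ^ 2" using frobenius_iterate[OF power_card] by simp
  finally have "x * (x - 1) = 0" by (simp add: algebra_simps power2_eq_square)
  thus ?thesis by auto
qed

lemma frobenius_surj: "\<exists>x. (x::'a) ^ (2 ^ p) = y"
proof -
  have "inj (\<lambda>x::'a. x ^ (2 ^ p))"
  proof (rule injI)
    fix x y :: 'a assume "x ^ (2 ^ p) = y ^ (2 ^ p)"
    hence "(x + y) ^ (2 ^ p) = 0" by (simp add: frobenius_add)
    thus "x = y" by (simp add: add_eq_0_iff)
  qed
  hence "surj (\<lambda>x::'a. x ^ (2 ^ p))" by (intro finite_UNIV_inj_surj) auto
  thus ?thesis unfolding surj_def by metis
qed

section \<open>The absolute trace and its additive character\<close>

abbreviation tr :: "'a \<Rightarrow> 'a" where "tr \<equiv> abs_trace n"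

lemma trace_add: "tr (x + y) = tr x + tr y"
  unfolding abs_trace_def by (simp add: frobenius_add sum.distrib)

lemma trace_square: "tr (x ^ 2) = tr x"
proof -
  have "tr (x ^ 2) = (\<Sum>i<n. x ^ (2 ^ Suc i))"
    unfolding abs_trace_def by (simp add: power_mult[symmetric] mult.commute)
  moreover have "x + (\<Sum>i<n. x ^ (2 ^ Suc i)) = (\<Sum>i<Suc n. x ^ (2 ^ i))"
    by (subst sum.lessThan_Suc_shift) simp
  moreover have "\<dots> = tr x + x"
    by (simp add: abs_trace_def power_card)
  ultimately show ?thesis by (simp add: add.commute)
qed

lemma trace_frobenius: "tr (x ^ (2 ^ j)) = tr x"
proof (induction j)
  case (Suc j)
  have "x ^ (2 ^ Suc j) = (x ^ (2 ^ j)) ^ 2" by (simp add: power_mult[symmetric] mult.commute)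
  then show ?case using Suc trace_square by simp
qed simp

text \<open>The trace takes values in the prime field, since \<open>tr(x)^2 = tr(x^2) = tr(x)\<close>.\<close>

lemma trace_values: "tr x = 0 \<or> tr x = 1"
proof -
  have "tr x ^ 2 = tr (x ^ 2)"
    unfolding abs_trace_def using frobenius_sum[of "\<lambda>i. x ^ 2 ^ i" "{..<n}" 1]
    by (simp add: power_mult[symmetric] mult.commute)
  hence "tr x ^ 2 = tr x" by (simp only: trace_square)
  hence "tr x * (tr x - 1) = 0" by (simp add: algebra_simps power2_eq_square)
  thus ?thesis by auto
qed

abbreviation \<chi> :: "'a \<Rightarrow> int" where "\<chi> \<equiv> chi n"

lemma chi_values: "\<chi> y = 1 \<or> \<chi> y = -1"
  unfolding chi_def by auto

lemma chi_eq_1_iff: "\<chi> y = 1 \<longleftrightarrow> tr y = 0"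
  unfolding chi_def by auto

lemma chi_add: "\<chi> (x + y) = \<chi> x * \<chi> y"
  unfolding chi_def trace_add using trace_values[of x] trace_values[of y] by auto

lemma character_sum:
  assumes "finite S"
    and closed: "\<And>x y. x \<in> S \<Longrightarrow> y \<in> S \<Longrightarrow> x + y \<in> S"
    and hom: "\<And>x y. x \<in> S \<Longrightarrow> y \<in> S \<Longrightarrow> h (x + y) = h x * h y"
    and pm_one: "\<And>x. x \<in> S \<Longrightarrow> h x = 1 \<or> h x = (-1::int)"
  shows "sum h (S::'a set) = (if \<exists>x\<in>S. h x = -1 then 0 else int (card S))"
proof (cases "\<exists>x\<in>S. h x = -1")
  case True
  then obtain x0 where x0: "x0 \<in> S" "h x0 = -1" by blast
  have "sum h S = (\<Sum>x\<in>S. h (x + x0))"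
    by (rule sum.reindex_bij_witness[of _ "\<lambda>x. x + x0" "\<lambda>x. x + x0"])
       (auto simp: closed x0 add.assoc)
  also have "\<dots> = - sum h S" using hom x0 by (simp add: sum_negf)
  finally show ?thesis using True by simp
next
  case False
  then show ?thesis using pm_one by simp
qed

section \<open>Roots of linearized polynomials\<close>

definition lin_poly :: "nat \<Rightarrow> (nat \<Rightarrow> 'a) \<Rightarrow> nat \<Rightarrow> 'a \<Rightarrow> 'a" where
  "lin_poly m a d z = (\<Sum>i\<le>d. a i * z ^ (2 ^ (m * i)))"

text \<open>The linearized polynomial of degree one with the roots \<open>0\<close> and \<open>v\<close>
  (and, for \<open>gcd(m,n) = 1\<close>, no others).\<close>

definition twist :: "nat \<Rightarrow> 'a \<Rightarrow> 'a \<Rightarrow> 'a" where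
  "twist m v z = v * z ^ (2 ^ m) + v ^ (2 ^ m) * z"

lemma lin_poly_Suc: "lin_poly m a (Suc d) z = lin_poly m a d z + a (Suc d) * z ^ (2 ^ (m * Suc d))"
  unfolding lin_poly_def by simp

lemma lin_poly_upd: "lin_poly m (a(Suc d := w)) d z = lin_poly m a d z"
  unfolding lin_poly_def by (intro sum.cong) auto

lemma lin_poly_zero: "lin_poly m a d 0 = 0"
  unfolding lin_poly_def by (simp add: power_0_left)

lemma twist_frobenius: "(twist m v z) ^ (2 ^ (m * j)) =
   v ^ (2 ^ (m * j)) * z ^ (2 ^ (m * Suc j)) + v ^ (2 ^ (m * Suc j)) * z ^ (2 ^ (m * j))"
  unfolding twist_def by (simp add: frobenius_add power_mult_distrib frobenius_comp add.commute)

lemma twist_add: "twist m v (x + y) = twist m v x + twist m v y"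
  unfolding twist_def by (simp add: frobenius_add algebra_simps)

text \<open>Division with remainder by \<open>twist m v\<close> in the ring of linearized polynomials
  (composition as multiplication): the remainder is linear, and the quotient has degree
  one less with explicitly known leading coefficient.\<close>

lemma lin_poly_divide_twist:
  assumes v: "v \<noteq> 0"
  shows "\<exists>b r. b d = a (Suc d) / v ^ (2 ^ (m * d)) \<and>
           (\<forall>z. lin_poly m a (Suc d) z = lin_poly m b d (twist m v z) + r * z)"
proof (induction d arbitrary: a)
  case 0
  let ?b0 = "a 1 / v"
  have "\<forall>z. lin_poly m a (Suc 0) z =
            lin_poly m (\<lambda>_. ?b0) 0 (twist m v z) + (a 0 + ?b0 * v ^ (2^m)) * z"
    using v two_eq_zero by (auto simp: lin_poly_def twist_def field_simps)
  then show ?case by (intro exI[of _ "\<lambda>_. ?b0"] exI[of _ "a 0 + ?b0 * v ^ (2^m)"]) simp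
next
  case (Suc d)
  define \<beta> where "\<beta> = a (Suc (Suc d)) / v ^ (2 ^ (m * Suc d))"
  define a' where "a' = a(Suc d := a (Suc d) + \<beta> * v ^ (2 ^ (m * Suc (Suc d))))"
  obtain b' r where eq: "\<forall>z. lin_poly m a' (Suc d) z = lin_poly m b' d (twist m v z) + r * z"
    using Suc.IH[of a'] by blast
  have "lin_poly m a (Suc (Suc d)) z = lin_poly m (b'(Suc d := \<beta>)) (Suc d) (twist m v z) + r * z"
    for z
  proof -
    have "lin_poly m a (Suc (Suc d)) z =
          lin_poly m a' (Suc d) z + \<beta> * (twist m v z) ^ (2 ^ (m * Suc d))"
      unfolding lin_poly_Suc twist_frobenius a'_def lin_poly_upd using v
      by (simp add: \<beta>_def field_simps)
    then show ?thesis using eq unfolding lin_poly_Suc lin_poly_upd by simp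
  qed
  moreover have "(b'(Suc d := \<beta>)) (Suc d) = a (Suc (Suc d)) / v ^ (2 ^ (m * Suc d))"
    by (simp add: \<beta>_def)
  ultimately show ?case by blast
qed

lemma twist_kernel:
  assumes m: "m > 0" "gcd m n = 1" and v: "v \<noteq> 0" and w: "twist m v w = 0"
  shows "w = 0 \<or> w = v"
proof (cases "w = 0")
  case False
  have "v * w ^ (2 ^ m) = v ^ (2 ^ m) * w" using w unfolding twist_def add_eq_0_iff .
  hence "(w / v) ^ (2 ^ m) = w / v"
    using v False by (simp add: power_divide field_simps)
  hence "w / v = 0 \<or> w / v = 1" using frobenius_fixed_points[OF m] by blast
  thus ?thesis using v False by auto
qed simp

text \<open>Being additive with kernel \<open>{0, v}\<close>, \<open>twist m v\<close> is at most two-to-one.\<close>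

lemma twist_fibre_card:
  assumes m: "m > 0" "gcd m n = 1" and v: "v \<noteq> 0"
  shows "card {z \<in> A. twist m v z = y} \<le> 2"
proof (cases "\<exists>z0. twist m v z0 = y")
  case True
  then obtain z0 where z0: "twist m v z0 = y" by blast
  have "{z \<in> A. twist m v z = y} \<subseteq> {z0, z0 + v}"
  proof
    fix z assume "z \<in> {z \<in> A. twist m v z = y}"
    hence "twist m v (z + z0) = 0" using z0 by (simp add: twist_add add_eq_0_iff)
    hence "z + z0 = 0 \<or> z + z0 = v" using twist_kernel[OF m v] by blast
    thus "z \<in> {z0, z0 + v}" by (metis add_eq_0_iff add.assoc add_self add_0_right insertCI)
  qed
  hence "card {z \<in> A. twist m v z = y} \<le> card {z0, z0 + v}" by (intro card_mono) auto
  also have "\<dots> \<le> 2" by (simp add: card_insert_le_m1)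
  finally show ?thesis .
qed simp

text \<open>A \<open>2^m\<close>-linearized polynomial of degree \<open>d\<close> (in the \<open>2^m\<close>-grading) with
  \<open>gcd(m,n) = 1\<close> has at most \<open>2^d\<close> roots in \<open>L\<close>: a nonzero root \<open>v\<close> lets us factor
  through the two-to-one map \<open>twist m v\<close>.\<close>

lemma lin_poly_root_bound:
  assumes m: "m > 0" "gcd m n = 1" and lead: "a d \<noteq> 0"
  shows "card {z. lin_poly m a d z = 0} \<le> 2 ^ d"
  using lead
proof (induction d arbitrary: a)
  case 0
  have "{z. lin_poly m a 0 z = 0} \<subseteq> {0}" using 0 by (auto simp: lin_poly_def)
  then show ?case using card_mono[of "{0}"] by simp
next
  case (Suc d)
  let ?V = "{z. lin_poly m a (Suc d) z = 0}"
  show ?case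
  proof (cases "?V \<subseteq> {0}")
    case True
    hence "card ?V \<le> 1" using card_mono[of "{0}" ?V] by simp
    also have "1 \<le> (2::nat) ^ Suc d" by simp
    finally show ?thesis .
  next
    case False
    then obtain v where v: "v \<in> ?V" "v \<noteq> 0" by blast
    obtain b r where b: "b d = a (Suc d) / v ^ (2 ^ (m * d))"
      and eq: "\<forall>z. lin_poly m a (Suc d) z = lin_poly m b d (twist m v z) + r * z"
      using lin_poly_divide_twist[OF v(2)] by blast
    have "twist m v v = 0" unfolding twist_def by (simp add: mult.commute)
    hence "r = 0" using eq v by (simp add: lin_poly_zero)
    hence "twist m v ` ?V \<subseteq> {y. lin_poly m b d y = 0}" using eq by auto
    moreover have "b d \<noteq> 0" using b Suc.prems v(2) by simp
    ultimately have image_card: "card (twist m v ` ?V) \<le> 2 ^ d"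
      using card_mono Suc.IH[of b] by (metis finite le_trans)
    have "card ?V \<le> card (\<Union>y\<in>twist m v ` ?V. {z\<in>?V. twist m v z = y})"
      by (intro card_mono) auto
    also have "\<dots> \<le> (\<Sum>y\<in>twist m v ` ?V. card {z\<in>?V. twist m v z = y})"
      by (intro card_UN_le) auto
    also have "\<dots> \<le> (\<Sum>y\<in>twist m v ` ?V. 2)"
      by (intro sum_mono twist_fibre_card[OF m v(2)])
    also have "\<dots> \<le> 2 ^ Suc d" using image_card by simp
    finally show ?thesis .
  qed
qed

section \<open>The squared Walsh sum of a quadratic form\<close>

definition qform :: "nat \<Rightarrow> nat \<Rightarrow> 'a \<Rightarrow> 'a \<Rightarrow> 'a \<Rightarrow> 'a \<Rightarrow> 'a" where
  "qform k t a b c x = a * x + b * x ^ (2 ^ k + 1) + c * x ^ (2 ^ (t * k) + 1)"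

definition polar :: "nat \<Rightarrow> nat \<Rightarrow> 'a \<Rightarrow> 'a \<Rightarrow> 'a \<Rightarrow> 'a \<Rightarrow> 'a" where
  "polar k t b c x z =
     b * (x ^ (2 ^ k) * z + x * z ^ (2 ^ k)) + c * (x ^ (2 ^ (t * k)) * z + x * z ^ (2 ^ (t * k)))"

definition radical :: "nat \<Rightarrow> nat \<Rightarrow> 'a \<Rightarrow> 'a \<Rightarrow> 'a set" where
  "radical k t b c = {z. \<forall>x. tr (polar k t b c x z) = 0}"

text \<open>The polar form arises from \<open>(x+z)^(2^j+1) = (x^(2^j) + z^(2^j)) (x+z)\<close>.\<close>

lemma power_frobenius_plus_one:
  "((x::'a) + z) ^ (2 ^ j + 1) = x ^ (2 ^ j + 1) + z ^ (2 ^ j + 1) + (x ^ (2 ^ j) * z + x * z ^ (2 ^ j))"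
proof -
  have "(x + z) ^ (2 ^ j + 1) = (x ^ (2 ^ j) + z ^ (2 ^ j)) * (x + z)"
    by (simp only: power_add power_one_right frobenius_add)
  then show ?thesis by (simp add: ring_distribs add_ac mult_ac)
qed

lemma qform_add: "qform k t a b c (x + z) = qform k t a b c x + qform k t a b c z + polar k t b c x z"
  unfolding qform_def polar_def power_frobenius_plus_one by (simp add: algebra_simps)

lemma polar_add_left: "polar k t b c (x + y) z = polar k t b c x z + polar k t b c y z"
  unfolding polar_def by (simp add: frobenius_add algebra_simps)

lemma polar_add_right: "polar k t b c z (x + y) = polar k t b c z x + polar k t b c z y"
  unfolding polar_def by (simp add: frobenius_add algebra_simps)

lemma zero_in_radical: "0 \<in> radical k t b c"
  unfolding radical_def polar_def abs_trace_def by (simp add: power_0_left)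

text \<open>For fixed \<open>z\<close>, \<open>x \<mapsto> \<chi>(polar x z)\<close> is a character of \<open>L\<close>; it is trivial
  exactly on the radical.\<close>

lemma polar_character_sum:
  "(\<Sum>x\<in>UNIV. \<chi> (polar k t b c x z)) = (if z \<in> radical k t b c then 2 ^ n else 0)"
proof -
  have "(\<Sum>x\<in>UNIV. \<chi> (polar k t b c x z)) =
        (if \<exists>x. \<chi> (polar k t b c x z) = -1 then 0 else int (card (UNIV::'a set)))"
    using character_sum[of UNIV "\<lambda>x. \<chi> (polar k t b c x z)"]
    by (auto simp: polar_add_left chi_add chi_values)
  moreover have "(\<exists>x. \<chi> (polar k t b c x z) = -1) \<longleftrightarrow> z \<notin> radical k t b c"
  proof -
    have "\<chi> y = -1 \<longleftrightarrow> tr y \<noteq> 0" for y using chi_values[of y] chi_eq_1_iff[of y] by auto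
    thus ?thesis by (auto simp: radical_def)
  qed
  ultimately show ?thesis using card_UNIV by simp
qed

lemma Walsh_square:
  "(Fw n k t a b c)^2 = 2 ^ n * (\<Sum>z\<in>radical k t b c. \<chi> (qform k t a b c z))"
proof -
  let ?f = "qform k t a b c" and ?B = "polar k t b c"
  have "(Fw n k t a b c)^2 = (\<Sum>x\<in>UNIV. \<Sum>y\<in>UNIV. \<chi> (?f x) * \<chi> (?f y))"
    by (simp add: Fw_def qform_def power2_eq_square sum_product)
  also have "\<dots> = (\<Sum>x\<in>UNIV. \<Sum>z\<in>UNIV. \<chi> (?f x) * \<chi> (?f (x + z)))"
  proof (rule sum.cong[OF refl])
    fix x
    show "(\<Sum>y\<in>UNIV. \<chi> (?f x) * \<chi> (?f y)) = (\<Sum>z\<in>UNIV. \<chi> (?f x) * \<chi> (?f (x + z)))"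
      by (rule sum.reindex_bij_witness[of _ "\<lambda>y. x + y" "\<lambda>y. x + y"])
         (auto simp: add.assoc[symmetric])
  qed
  also have "\<dots> = (\<Sum>x\<in>UNIV. \<Sum>z\<in>UNIV. \<chi> (?f z) * \<chi> (?B x z))"
  proof (intro sum.cong refl)
    fix x z
    have "?f x + ?f (x + z) = ?f z + ?B x z"
      unfolding qform_add by (simp add: add.assoc[symmetric])
    then show "\<chi> (?f x) * \<chi> (?f (x + z)) = \<chi> (?f z) * \<chi> (?B x z)"
      by (metis chi_add)
  qed
  also have "\<dots> = (\<Sum>z\<in>UNIV. \<chi> (?f z) * (\<Sum>x\<in>UNIV. \<chi> (?B x z)))"
    by (subst sum.swap) (simp add: sum_distrib_left)
  also have "\<dots> = 2 ^ n * (\<Sum>z\<in>radical k t b c. \<chi> (?f z))"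
    by (simp add: polar_character_sum if_distrib sum.If_cases sum_distrib_left mult.commute)
  finally show ?thesis .
qed

text \<open>On the radical, \<open>\<chi> \<circ> qform\<close> is a character, so its sum there is \<open>0\<close> or the
  size of the radical.\<close>

lemma radical_character_sum:
  "(\<Sum>z\<in>radical k t b c. \<chi> (qform k t a b c z)) \<in> {0, int (card (radical k t b c))}"
proof -
  have "(\<Sum>z\<in>radical k t b c. \<chi> (qform k t a b c z)) =
        (if \<exists>z\<in>radical k t b c. \<chi> (qform k t a b c z) = -1 then 0 else int (card (radical k t b c)))"
  proof (rule character_sum)
    show "x + y \<in> radical k t b c" if "x \<in> radical k t b c" "y \<in> radical k t b c" for x y
      using that by (auto simp: radical_def polar_add_right trace_add)
    show "\<chi> (qform k t a b c (x + y)) = \<chi> (qform k t a b c x) * \<chi> (qform k t a b c y)"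
      if "x \<in> radical k t b c" "y \<in> radical k t b c" for x y
      using that unfolding qform_add chi_add by (auto simp: radical_def chi_eq_1_iff[symmetric])
  qed (auto simp: chi_values)
  thus ?thesis by auto
qed

lemma Walsh_square_cases:
  "(Fw n k t a b c)^2 = 0 \<or> (Fw n k t a b c)^2 = 2 ^ n * int (card (radical k t b c))"
  using Walsh_square[of k t a b c] radical_character_sum[of k t a b c] by auto

end

section \<open>Fields with \<open>2^n\<close> elements, \<open>n\<close> odd\<close>

locale odd_binary_field = binary_field +
  assumes odd_n: "odd n"
begin

text \<open>\<open>tr 1 = n \<cdot> 1\<close>, which is \<open>1\<close> for odd \<open>n\<close>; hence the trace is not identically zero.\<close>

lemma trace_one: "tr 1 = 1"
proof -
  obtain q where "n = 2 * q + 1" using odd_n oddE by blast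
  then have "tr 1 = 2 * of_nat q + 1" unfolding abs_trace_def by simp
  then show ?thesis using two_eq_zero by simp
qed

lemma trace_nondegenerate:
  assumes "\<forall>x. tr (x ^ (2 ^ p) * w) = 0"
  shows "w = 0"
proof (rule ccontr)
  assume "w \<noteq> 0"
  obtain x where "x ^ (2 ^ p) = inverse w" using frobenius_surj by blast
  hence "tr 1 = 0" using assms \<open>w \<noteq> 0\<close> by (metis left_inverse)
  thus False using trace_one by simp
qed

text \<open>Adjoint coefficients: \<open>tr (polar x z) = tr (x^(2^(2k)) L\<^sub>2(z))\<close> for \<open>t = 2\<close>, with
  \<open>L\<^sub>2(z) = c z + b^(2^k) z^(2^k) + b^(2^(2k)) z^(2^(3k)) + c^(2^(2k)) z^(2^(4k))\<close>,
  and \<open>tr (polar x z) = tr (x^(2^(3k)) L\<^sub>3(z))\<close> for \<open>t = 3\<close>, with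
  \<open>L\<^sub>3(z) = c z + b^(2^(2k)) z^(2^(2k)) + b^(2^(3k)) z^(2^(4k)) + c^(2^(3k)) z^(2^(6k))\<close>.\<close>

definition adjoint_coeffs2 :: "nat \<Rightarrow> 'a \<Rightarrow> 'a \<Rightarrow> nat \<Rightarrow> 'a" where
  "adjoint_coeffs2 k b c i = (if i = 0 then c else if i = 1 then b ^ (2 ^ k) else if i = 2 then 0
       else if i = 3 then b ^ (2 ^ (2*k)) else c ^ (2 ^ (2*k)))"

definition adjoint_coeffs3 :: "nat \<Rightarrow> 'a \<Rightarrow> 'a \<Rightarrow> nat \<Rightarrow> 'a" where
  "adjoint_coeffs3 k b c i = (if i = 0 then c else if i = 1 then b ^ (2 ^ (2*k))
       else if i = 2 then b ^ (2 ^ (3*k)) else c ^ (2 ^ (3*k)))"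

lemma trace_shift: "tr u = tr (u ^ (2 ^ j))"
  using trace_frobenius[of u j] by simp

lemma trace_polar2:
  "tr (polar k 2 b c x z) = tr (x ^ (2 ^ (2*k)) * lin_poly k (adjoint_coeffs2 k b c) 4 z)"
proof -
  have e1: "tr (b * (x^(2^k)*z)) = tr (x ^ (2 ^ (2*k)) * (b^(2^k) * z^(2^k)))"
    using trace_shift[of "b * (x^(2^k)*z)" k]
    by (simp add: power_mult_distrib frobenius_comp mult_2 mult_2_right mult_ac)
  have e2: "tr (b * (x*z^(2^k))) = tr (x ^ (2 ^ (2*k)) * (b^(2^(2*k)) * z^(2^(3*k))))"
    using trace_shift[of "b * (x*z^(2^k))" "2*k"]
    by (simp add: power_mult_distrib frobenius_comp mult_ac)
  have e4: "tr (c * (x*z^(2^(2*k)))) = tr (x ^ (2 ^ (2*k)) * (c^(2^(2*k)) * z^(2^(4*k))))"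
    using trace_shift[of "c * (x*z^(2^(2*k)))" "2*k"]
    by (simp add: power_mult_distrib frobenius_comp mult_ac)
  have "lin_poly k (adjoint_coeffs2 k b c) 4 z =
        c * z + b^(2^k) * z^(2^k) + b^(2^(2*k)) * z^(2^(3*k)) + c^(2^(2*k)) * z^(2^(4*k))"
    by (simp add: lin_poly_def adjoint_coeffs2_def eval_nat_numeral mult_ac)
  then show ?thesis
    using e1 e2 e4 unfolding polar_def by (simp add: ring_distribs trace_add mult_ac add_ac)
qed

lemma trace_polar3:
  "tr (polar k 3 b c x z) = tr (x ^ (2 ^ (3*k)) * lin_poly (2*k) (adjoint_coeffs3 k b c) 3 z)"
proof -
  have e1: "tr (b * (x^(2^k)*z)) = tr (x ^ (2 ^ (3*k)) * (b^(2^(2*k)) * z^(2^(2*k))))"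
    using trace_shift[of "b * (x^(2^k)*z)" "2*k"]
    by (simp add: power_mult_distrib frobenius_comp mult_ac)
  have e2: "tr (b * (x*z^(2^k))) = tr (x ^ (2 ^ (3*k)) * (b^(2^(3*k)) * z^(2^(4*k))))"
    using trace_shift[of "b * (x*z^(2^k))" "3*k"]
    by (simp add: power_mult_distrib frobenius_comp mult_ac)
  have e4: "tr (c * (x*z^(2^(3*k)))) = tr (x ^ (2 ^ (3*k)) * (c^(2^(3*k)) * z^(2^(6*k))))"
    using trace_shift[of "c * (x*z^(2^(3*k)))" "3*k"]
    by (simp add: power_mult_distrib frobenius_comp mult_ac)
  have "lin_poly (2*k) (adjoint_coeffs3 k b c) 3 z =
        c * z + b^(2^(2*k)) * z^(2^(2*k)) + b^(2^(3*k)) * z^(2^(4*k)) + c^(2^(3*k)) * z^(2^(6*k))"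
    by (simp add: lin_poly_def adjoint_coeffs3_def eval_nat_numeral mult_ac add_ac)
  then show ?thesis
    using e1 e2 e4 unfolding polar_def by (simp add: ring_distribs trace_add mult_ac add_ac)
qed

lemma radical_subset_roots:
  assumes "\<And>x z. tr (polar k t b c x z) = tr (x ^ (2 ^ p) * L z)"
  shows "radical k t b c \<subseteq> {z. L z = 0}"
  using trace_nondegenerate assms by (auto simp: radical_def)

lemma card_radical:
  assumes k: "k > 0" "gcd k n = 1" and t: "t \<in> {2,3}" and c: "c \<noteq> 0"
  shows "card (radical k t b c) \<le> 16"
proof (cases "t = 2")
  case True
  have "card (radical k t b c) \<le> card {z. lin_poly k (adjoint_coeffs2 k b c) 4 z = 0}"
    using radical_subset_roots[OF trace_polar2] True by (intro card_mono) auto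
  also have "\<dots> \<le> 2 ^ 4"
    using lin_poly_root_bound[OF k, of "adjoint_coeffs2 k b c" 4] c by (simp add: adjoint_coeffs2_def)
  finally show ?thesis by simp
next
  case False
  hence t3: "t = 3" using t by auto
  have "coprime 2 n" using odd_n by simp
  moreover have "coprime k n" using k(2) by (simp add: coprime_iff_gcd_eq_1)
  ultimately have "coprime (2*k) n" by simp
  hence g: "gcd (2*k) n = 1" by simp
  have "card (radical k t b c) \<le> card {z. lin_poly (2*k) (adjoint_coeffs3 k b c) 3 z = 0}"
    using radical_subset_roots[OF trace_polar3] t3 by (intro card_mono) auto
  also have "\<dots> \<le> 2 ^ 3"
    using lin_poly_root_bound[OF _ g, of "adjoint_coeffs3 k b c" 3] k c
    by (simp add: adjoint_coeffs3_def)
  finally show ?thesis by simp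
qed

end

section \<open>The value set\<close>

text \<open>For odd \<open>n\<close>, an integer \<open>F\<close> with \<open>F^2 = 2^n r\<close> and \<open>1 \<le> r \<le> 16\<close> is
  \<open>\<plusminus>2^((n+1)/2)\<close> or \<open>\<plusminus>2^((n+3)/2)\<close>: writing \<open>F = 2^((n-1)/2) G\<close> gives
  \<open>G^2 = 2r \<le> 32\<close>, so \<open>G \<in> {\<plusminus>2, \<plusminus>4}\<close>.\<close>

lemma square_eq_pow2_odd_times_small:
  fixes F :: int and n r :: nat
  assumes "odd n" "1 \<le> r" "r \<le> 16" "F^2 = 2^n * int r"
  shows "F \<in> {2 ^ ((n + 1) div 2), - (2 ^ ((n + 1) div 2)), 2 ^ ((n + 3) div 2), - (2 ^ ((n + 3) div 2))}"
proof -
  obtain q where q: "n = 2*q+1" using assms(1) oddE by blast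
  have "(2^q)^2 dvd F^2"
    using assms(4) q by (simp add: power_add power_mult_distrib power_mult[symmetric] mult.commute)
  hence "(2::int)^q dvd F" by simp
  then obtain G where G: "F = 2^q * G" by blast
  have "(2^q)^2 * G^2 = (2^q)^2 * (2 * int r)"
    using assms(4) q G by (simp add: power_add power_mult_distrib power_mult[symmetric] mult_ac)
  hence G2: "G^2 = 2 * int r" by simp
  have "\<bar>G\<bar> \<le> 5"
  proof (rule ccontr)
    assume "\<not> \<bar>G\<bar> \<le> 5"
    hence "6 * 6 \<le> \<bar>G\<bar> * \<bar>G\<bar>" by (intro mult_mono) auto
    thus False using G2 assms(3) by (simp add: power2_eq_square abs_mult[symmetric])
  qed
  hence "G \<in> {-5..5}" by auto
  hence "G \<in> {-5,-4,-3,-2,-1,0,1,2,3,4,5}" by (simp add: atLeastAtMost_iff) presburger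
  hence "G = 2 \<or> G = -2 \<or> G = 4 \<or> G = -4"
    using G2 assms(2) by (auto simp: power2_eq_square; presburger)
  moreover have "(n + 1) div 2 = q + 1" "(n + 3) div 2 = q + 2" using q by auto
  ultimately show ?thesis using G by (auto simp: power_add)
qed

theorem mainTheorem2:
  fixes a b c :: "'a::{field,finite}" and n k t :: nat
  assumes "card (UNIV :: 'a set) = 2 ^ n"
    and "odd n"
    and "k > 0" and "gcd k n = 1"
    and "t \<in> {2, 3}"
    and "b \<noteq> 0" and "c \<noteq> 0"
  shows "Fw n k t a b c \<in> {0, 2 ^ ((n + 1) div 2), - (2 ^ ((n + 1) div 2)),
                           2 ^ ((n + 3) div 2), - (2 ^ ((n + 3) div 2))}"
proof -
  have "odd_binary_field TYPE('a) n"
    using assms(1,2) by unfold_locales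
  then interpret odd_binary_field n .
  have "card (radical k t b c) \<ge> 1"
    using zero_in_radical[of k t b c] by (metis One_nat_def Suc_leI card_gt_0_iff empty_iff finite)
  moreover have "card (radical k t b c) \<le> 16"
    using card_radical[OF assms(3,4,5,7)] .
  ultimately show ?thesis
    using Walsh_square_cases[of k t a b c] square_eq_pow2_odd_times_small[OF assms(2)] by auto
qed

end
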